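(* Let $s\in(0,1)$, $p,q\in[1,\infty)$, and $f:\mathbb{R}^n\to\mathbb{R}$ measurable. Then $$n\,\omega_n^{\frac{n+sq}{n}}\,|\Pi^{*,s}_{p,q}f|^{-\frac{sq}{n}}\le\int_{\mathbb{R}^n}|h|^{-sq}\|\Delta_hf\|_{L^p}^q\,\frac{dh}{|h|^n}.$$ In particular, there is a constant $C$ depending only on $n,p,q$ such that $|\Pi^{*,s}_{p,q}f|^{-\frac{sq}{n}}\le C\|f\|^q_{B^s_{p,q}}$.
   Context: $\omega_n=|B^n|$, $\Delta_hf(x)=f(x+h)-f(x)$. $\Pi^{*,s}_{p,q}f$ is the star-shaped set with gauge $\|\xi\|_{\Pi^{*,s}_{p,q}f}^{sq}=\int_0^\infty t^{-sq}\|\Delta_{t\xi}f\|_{L^p}^q\frac{dt}{t}$ and volume $\frac1n\int_{\mathbb{S}^{n-1}}\|\xi\|^{-n}_{\Pi^{*,s}_{p,q}f}d\sigma(\xi)$. $\omega(f,t)_p=(\frac{1}{t^n\omega_n}\int_{|h|<t}\|\Delta_hf\|^p_{L^p}dh)^{1/p}$ and $\|f\|_{B^s_{p,q}}=(\int_0^\infty t^{-sq}\omega(f,t)_p^q\frac{dt}{t})^{1/q}$. *)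

theory Defs
  imports "HOL-Analysis.Analysis"
begin

definition epow :: "ennreal \<Rightarrow> real \<Rightarrow> ennreal" where
  "epow x a =
     (if a = 0 then 1
      else if x = 0 then (if a < 0 then \<infinity> else 0)
      else if x = \<infinity> then (if a > 0 then \<infinity> else 0)
      else ennreal (enn2real x powr a))"

definition omega_n :: "'a::euclidean_space itself \<Rightarrow> real" where
  "omega_n _ = measure lborel (ball (0::'a) 1)"

definition diffLp_pow :: "('a::euclidean_space \<Rightarrow> real) \<Rightarrow> real \<Rightarrow> 'a \<Rightarrow> ennreal" where
  "diffLp_pow f p h = (\<integral>\<^sup>+ x. ennreal (\<bar>f (x + h) - f x\<bar> powr p) \<partial>lebesgue)"

definition diffLp :: "('a::euclidean_space \<Rightarrow> real) \<Rightarrow> real \<Rightarrow> 'a \<Rightarrow> ennreal" where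
  "diffLp f p h = epow (diffLp_pow f p h) (1 / p)"

definition polar_gauge :: "('a::euclidean_space \<Rightarrow> real) \<Rightarrow> real \<Rightarrow> real \<Rightarrow> real \<Rightarrow> 'a \<Rightarrow> ennreal" where
  "polar_gauge f s p q \<xi> =
     epow (\<integral>\<^sup>+ t \<in> {0<..}. epow (ennreal t) (- s * q) * epow (diffLp f p (t *\<^sub>R \<xi>)) q
              * ennreal (1 / t) \<partial>lborel) (1 / (s * q))"

definition polar_proj_body :: "('a::euclidean_space \<Rightarrow> real) \<Rightarrow> real \<Rightarrow> real \<Rightarrow> real \<Rightarrow> 'a set" where
  "polar_proj_body f s p q = {\<xi>. polar_gauge f s p q \<xi> \<le> 1}"

definition modulus :: "('a::euclidean_space \<Rightarrow> real) \<Rightarrow> real \<Rightarrow> real \<Rightarrow> ennreal" where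
  "modulus f p t =
     epow (ennreal (1 / (t ^ DIM('a) * omega_n TYPE('a)))
           * (\<integral>\<^sup>+ h \<in> ball 0 t. epow (diffLp f p h) p \<partial>lebesgue)) (1 / p)"

definition besov_norm :: "('a::euclidean_space \<Rightarrow> real) \<Rightarrow> real \<Rightarrow> real \<Rightarrow> real \<Rightarrow> ennreal" where
  "besov_norm f s p q =
     epow (\<integral>\<^sup>+ t \<in> {0<..}. epow (ennreal t) (- s * q) * epow (modulus f p t) q
              * ennreal (1 / t) \<partial>lborel) (1 / q)"

end

theory Submission
  imports Defs
begin

text \<open>In polar coordinates \<open>h = t\<xi>\<close>, the volume of the star body \<open>K = {\<Phi> \<le> 1}\<close> becomes an
  integral over the unit ball of \<open>a(\<xi>)\<^sup>-\<^sup>n\<^sup>/\<^sup>\<sigma>\<close>, where \<open>a(\<xi>) = |\<xi>|\<^sup>-\<^sup>\<sigma> \<Phi>(\<xi>)\<close> and \<open>\<Phi>\<close> is the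
  \<open>\<sigma>\<close>-th power of the gauge, \<open>\<sigma> = s q\<close>, while the difference integral on the right becomes
  \<open>n \<integral>\<^sub>B a\<close>. Jensen's inequality for the convex function \<open>x \<mapsto> x\<^sup>-\<^sup>n\<^sup>/\<^sup>\<sigma>\<close> on the unit ball
  gives the first inequality. For the second, averaging the triangle inequality
  \<open>\<parallel>\<Delta>\<^sub>h f\<parallel>\<^sup>p \<le> 2\<^sup>p\<^sup>-\<^sup>1 (\<parallel>\<Delta>\<^sub>k f\<parallel>\<^sup>p + \<parallel>\<Delta>\<^sub>h\<^sub>-\<^sub>k f\<parallel>\<^sup>p)\<close> over \<open>k \<in> B(0,|h|)\<close> bounds \<open>\<parallel>\<Delta>\<^sub>h f\<parallel>\<^sub>p\<close> by the
  modulus of smoothness at \<open>2|h|\<close>, and integrating in polar coordinates against \<open>dt/t\<close>,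
  which is invariant under \<open>t \<mapsto> 2t\<close>, gives the Besov seminorm.\<close>

lemma pred_in_ball [measurable (raw)]:
  fixes f :: "'b \<Rightarrow> 'a::euclidean_space"
  shows "f \<in> M \<rightarrow>\<^sub>M borel \<Longrightarrow> c \<in> M \<rightarrow>\<^sub>M borel \<Longrightarrow> r \<in> M \<rightarrow>\<^sub>M borel \<Longrightarrow>
    Measurable.pred M (\<lambda>x. f x \<in> ball (c x) (r x))"
  unfolding mem_ball dist_norm by measurable

lemma borel_measurable_epow: "(\<lambda>x. epow x a) \<in> borel \<rightarrow>\<^sub>M (borel :: ennreal measure)"
  unfolding epow_def
  apply (intro measurable_If measurable_const)
  apply (simp_all add: pred_def[symmetric])
  apply measurable
  done

lemma measurable_epow [measurable (raw)]:
  "F \<in> M \<rightarrow>\<^sub>M borel \<Longrightarrow> (\<lambda>x. epow (F x) a) \<in> M \<rightarrow>\<^sub>M borel"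
  using measurable_compose[OF _ borel_measurable_epow] by blast

lemma powr_le_powr_iff:
  fixes x y a :: real
  assumes "0 < a" "0 \<le> x" "0 \<le> y"
  shows "x powr a \<le> y powr a \<longleftrightarrow> x \<le> y"
  using assms by (meson not_le powr_less_mono2 powr_mono2 less_imp_le)

lemma epow_ennreal: "0 < t \<Longrightarrow> epow (ennreal t) a = ennreal (t powr a)"
  by (simp add: epow_def)

lemma epow_0_pos [simp]: "0 < a \<Longrightarrow> epow 0 a = 0"
  by (simp add: epow_def)

lemma epow_0_neg [simp]: "a < 0 \<Longrightarrow> epow 0 a = \<infinity>"
  by (simp add: epow_def)

lemma epow_cases:
  obtains "x = 0" | "x = \<infinity>" | t where "0 < t" "x = ennreal t"
proof (cases x)
  case (real r)
  then show ?thesis using that by (cases "r = 0") auto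
qed (use that in auto)

lemma epow_one [simp]: "epow x 1 = x"
  by (cases x rule: epow_cases) (auto simp: epow_ennreal epow_def)

lemma epow_epow:
  assumes "0 < a"
  shows "epow (epow x a) b = epow x (a * b)"
proof (cases x rule: epow_cases)
  case (3 t)
  then show ?thesis using assms by (simp add: epow_ennreal powr_powr)
qed (use assms in \<open>(cases "b = 0"; cases "b < 0");
       auto simp: epow_def zero_less_mult_iff mult_less_0_iff\<close>)+

lemma epow_mono:
  assumes "0 < a" "x \<le> y"
  shows "epow x a \<le> epow y a"
proof (cases x rule: epow_cases)
  case (3 t)
  then show ?thesis
    using assms by (cases y rule: epow_cases) (auto simp: epow_ennreal epow_def powr_mono2)
qed (use assms in \<open>auto simp: top_unique\<close>)

lemma epow_antimono:
  assumes "a < 0" "x \<le> y"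
  shows "epow y a \<le> epow x a"
proof (cases x rule: epow_cases)
  case (3 t)
  then show ?thesis
    using assms by (cases y rule: epow_cases) (auto simp: epow_ennreal epow_def powr_mono2')
qed (use assms in \<open>auto simp: top_unique\<close>)

lemma epow_le_1_iff:
  assumes "0 < a"
  shows "epow x a \<le> 1 \<longleftrightarrow> x \<le> 1"
proof (cases x rule: epow_cases)
  case (3 t)
  then show ?thesis
    using powr_le_powr_iff[OF assms, of t 1] assms by (simp add: epow_ennreal)
qed (use assms in \<open>auto simp: epow_def\<close>)

lemma epow_mult_const:
  assumes "0 < c"
  shows "epow (ennreal c * x) a = ennreal (c powr a) * epow x a"
proof (cases x rule: epow_cases)
  case (3 t)
  then show ?thesis using assms by (simp add: epow_ennreal ennreal_mult[symmetric] powr_mult)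
qed (use assms in \<open>(cases "a = 0"; cases "a < 0"); auto simp: epow_def ennreal_mult_top\<close>)+

section \<open>Polar coordinates\<close>

lemma nn_integral_lborel_affine:
  fixes F :: "'a::euclidean_space \<Rightarrow> ennreal"
  assumes [measurable]: "F \<in> borel_measurable borel" and "c \<noteq> 0"
  shows "(\<integral>\<^sup>+x. F x \<partial>lborel) = ennreal (\<bar>c\<bar> ^ DIM('a)) * (\<integral>\<^sup>+x. F (t + c *\<^sub>R x) \<partial>lborel)"
  by (subst lborel_affine[OF \<open>c \<noteq> 0\<close>, of t])
     (simp add: nn_integral_density nn_integral_distr nn_integral_cmult)

lemma nn_integral_lborel_translate:
  fixes F :: "'a::euclidean_space \<Rightarrow> ennreal"
  assumes "F \<in> borel_measurable borel"
  shows "(\<integral>\<^sup>+x. F (x + k) \<partial>lborel) = (\<integral>\<^sup>+x. F x \<partial>lborel)"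
  using nn_integral_lborel_affine[OF assms, of 1 k] by (simp add: add.commute)

lemma omega_n_pos: "0 < omega_n TYPE('a::euclidean_space)"
  unfolding omega_n_def using content_ball_pos[of 1 "0::'a"] by simp

lemma emeasure_ball_omega_n:
  assumes "0 \<le> r"
  shows "emeasure lborel (ball (0::'a::euclidean_space) r) = ennreal (r ^ DIM('a) * omega_n TYPE('a))"
proof -
  have "emeasure lborel (ball (0 :: 'a) 1) = ennreal (omega_n TYPE('a))"
    unfolding omega_n_def using emeasure_lborel_ball_finite[of "0::'a" 1]
    by (simp add: emeasure_eq_ennreal_measure)
  then show ?thesis
    using emeasure_lebesgue_ball_conv_unit_ball[OF assms, of "0::'a"] assms omega_n_pos[where 'a='a]
    by (simp add: ennreal_mult)
qed

lemma nn_integral_dilation: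
  fixes G :: "real \<Rightarrow> ennreal"
  assumes [measurable]: "G \<in> borel_measurable borel" and l: "0 < l"
  shows "(\<integral>\<^sup>+t\<in>{0<..}. G (l * t) * ennreal (1 / t) \<partial>lborel)
       = (\<integral>\<^sup>+t\<in>{0<..}. G t * ennreal (1 / t) \<partial>lborel)"
proof -
  define F where "F u = G u * ennreal (1 / u) * indicator {0<..} u" for u
  have [measurable]: "F \<in> borel_measurable borel" unfolding F_def by measurable
  have F_scaled: "F (0 + l * t) = ennreal (1 / l) * (G (l * t) * ennreal (1 / t) * indicator {0<..} t)" for t
  proof (cases "0 < t")
    case True
    then have "ennreal (1 / (l * t)) = ennreal (1 / l) * ennreal (1 / t)"
      using l by (simp add: ennreal_mult[symmetric])
    then show ?thesis using True l by (simp add: F_def mult_ac)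
  qed (use l in \<open>simp add: F_def zero_less_mult_iff\<close>)
  have "(\<integral>\<^sup>+t\<in>{0<..}. G t * ennreal (1 / t) \<partial>lborel) = ennreal l * (\<integral>\<^sup>+t. F (0 + l * t) \<partial>lborel)"
    using nn_integral_real_affine[of F l 0] l by (simp add: F_def)
  also have "\<dots> = ennreal l * ennreal (1 / l) * (\<integral>\<^sup>+t\<in>{0<..}. G (l * t) * ennreal (1 / t) \<partial>lborel)"
    unfolding F_scaled by (subst nn_integral_cmult) (auto simp: mult.assoc)
  finally show ?thesis
    using l by (simp add: ennreal_mult[symmetric])
qed

lemma nn_integral_powr_tail:
  fixes r a :: real
  assumes r: "0 < r" and a: "0 < a"
  shows "(\<integral>\<^sup>+t\<in>{r<..}. ennreal (t powr (- a - 1)) \<partial>lborel) = ennreal (r powr - a / a)"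
proof -
  have "((\<lambda>t. t powr (- a - 1)) has_integral r powr - a / a) {r..}"
    using has_integral_powr_to_inf[of "- a - 1" r] r a by simp
  then have "(\<integral>\<^sup>+t\<in>{r..}. ennreal (t powr (- a - 1)) \<partial>lborel) = ennreal (r powr - a / a)"
    using nn_integral_has_integral_lebesgue'[of "{r..}"] by simp
  moreover have "(\<integral>\<^sup>+t\<in>{r<..}. ennreal (t powr (- a - 1)) \<partial>lborel)
      = (\<integral>\<^sup>+t\<in>{r..}. ennreal (t powr (- a - 1)) \<partial>lborel)"
    by (rule nn_integral_cong_AE)
      (use AE_lborel_singleton[of r] in \<open>eventually_elim, auto simp: indicator_def\<close>)
  ultimately show ?thesis by simp
qed

definition ray_integral :: "('a::real_vector \<Rightarrow> ennreal) \<Rightarrow> 'a \<Rightarrow> ennreal" where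
  "ray_integral H \<xi> = (\<integral>\<^sup>+t\<in>{0<..}. H (t *\<^sub>R \<xi>) * ennreal (1 / t) \<partial>lborel)"

lemma borel_measurable_ray_integral [measurable]:
  fixes H :: "'a::euclidean_space \<Rightarrow> ennreal"
  assumes [measurable]: "H \<in> borel_measurable borel"
  shows "ray_integral H \<in> borel_measurable borel"
  unfolding ray_integral_def by measurable

lemma nn_integral_unit_ball_scaleR:
  fixes H :: "'a::euclidean_space \<Rightarrow> ennreal"
  assumes [measurable]: "H \<in> borel_measurable borel" and t: "0 < t"
  shows "(\<integral>\<^sup>+\<xi>\<in>ball 0 1. H (t *\<^sub>R \<xi>) \<partial>lborel)
       = ennreal (1 / t ^ DIM('a)) * (\<integral>\<^sup>+h\<in>ball 0 t. H h \<partial>lborel)"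
proof -
  have "(\<integral>\<^sup>+h\<in>ball 0 t. H h \<partial>lborel)
      = ennreal (t ^ DIM('a)) * (\<integral>\<^sup>+\<xi>. H (t *\<^sub>R \<xi>) * indicator (ball 0 t) (t *\<^sub>R \<xi>) \<partial>lborel)"
    using nn_integral_lborel_affine[of "\<lambda>h. H h * indicator (ball 0 t) h" t 0] t by simp
  also have "(\<lambda>\<xi>::'a. indicator (ball 0 t) (t *\<^sub>R \<xi>) :: ennreal) = indicator (ball 0 1)"
    using t by (intro ext) (simp add: indicator_def)
  finally show ?thesis
    using t by (simp add: mult.assoc[symmetric] ennreal_mult[symmetric])
qed

text \<open>Exchange the order of integration, rescale the unit ball to the ball of radius \<open>t\<close>, and
  exchange back: the remaining integral in \<open>t\<close> runs over \<open>(|h|,\<infinity>)\<close>.\<close>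

lemma nn_integral_polar:
  fixes H :: "'a::euclidean_space \<Rightarrow> ennreal"
  assumes [measurable]: "H \<in> borel_measurable borel"
  shows "(\<integral>\<^sup>+h. epow (ennreal (norm h)) (- real DIM('a)) * H h \<partial>lborel)
       = ennreal (real DIM('a)) * (\<integral>\<^sup>+\<xi>\<in>ball 0 1. ray_integral H \<xi> \<partial>lborel)"
proof -
  define n where "n = DIM('a)"
  have n: "0 < n" by (simp add: n_def)
  define w where "w t = indicator {0<..} t * ennreal (t powr (- real n - 1))" for t :: real
  have [measurable]: "w \<in> borel_measurable borel" unfolding w_def by measurable
  have scaled: "(\<integral>\<^sup>+\<xi>. H (t *\<^sub>R \<xi>) * ennreal (1 / t) * indicator {0<..} t * indicator (ball 0 1) \<xi> \<partial>lborel)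
      = (\<integral>\<^sup>+h. H h * w t * indicator (ball 0 t) h \<partial>lborel)" for t
  proof (cases "0 < t")
    case True
    have "(\<integral>\<^sup>+\<xi>. H (t *\<^sub>R \<xi>) * ennreal (1 / t) * indicator {0<..} t * indicator (ball 0 1) \<xi> \<partial>lborel)
        = ennreal (1 / t) * (\<integral>\<^sup>+\<xi>\<in>ball 0 1. H (t *\<^sub>R \<xi>) \<partial>lborel)"
      using True by (subst nn_integral_cmult[symmetric]) (auto intro!: nn_integral_cong simp: mult_ac)
    also have "\<dots> = ennreal (1 / t) * ennreal (1 / t ^ n) * (\<integral>\<^sup>+h\<in>ball 0 t. H h \<partial>lborel)"
      using nn_integral_unit_ball_scaleR[of H t] True by (simp add: n_def mult.assoc)
    also have "ennreal (1 / t) * ennreal (1 / t ^ n) = w t"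
      using True by (simp add: w_def ennreal_mult[symmetric] powr_diff powr_minus powr_realpow divide_inverse)
    also have "w t * (\<integral>\<^sup>+h\<in>ball 0 t. H h \<partial>lborel) = (\<integral>\<^sup>+h. H h * w t * indicator (ball 0 t) h \<partial>lborel)"
      by (subst nn_integral_cmult[symmetric]) (auto intro!: nn_integral_cong simp: mult_ac)
    finally show ?thesis .
  qed (simp add: w_def)
  have tail: "(\<integral>\<^sup>+t. H h * w t * indicator (ball 0 t) h \<partial>lborel)
      = ennreal (1 / real n) * (epow (ennreal (norm h)) (- real n) * H h)" if "h \<noteq> 0" for h :: 'a
  proof -
    have h: "0 < norm h" using that by simp
    have "(\<integral>\<^sup>+t. H h * w t * indicator (ball 0 t) h \<partial>lborel)
        = H h * (\<integral>\<^sup>+t\<in>{norm h<..}. ennreal (t powr (- real n - 1)) \<partial>lborel)"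
      using h by (subst nn_integral_cmult[symmetric])
        (auto intro!: nn_integral_cong simp: w_def indicator_def dest: le_less_trans[OF norm_ge_zero])
    also have "\<dots> = H h * ennreal (norm h powr - real n / real n)"
      using nn_integral_powr_tail[OF h, of "real n"] n by simp
    also have "ennreal (norm h powr - real n / real n) = ennreal (1 / real n) * epow (ennreal (norm h)) (- real n)"
      using h n by (simp add: epow_ennreal ennreal_mult[symmetric])
    finally show ?thesis by (simp add: mult_ac)
  qed
  have "(\<integral>\<^sup>+\<xi>\<in>ball 0 1. ray_integral H \<xi> \<partial>lborel)
      = (\<integral>\<^sup>+\<xi>. \<integral>\<^sup>+t. H (t *\<^sub>R \<xi>) * ennreal (1 / t) * indicator {0<..} t * indicator (ball 0 1) \<xi> \<partial>lborel \<partial>lborel)"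
    unfolding ray_integral_def by (rule nn_integral_cong) (simp add: nn_integral_multc)
  also have "\<dots> = (\<integral>\<^sup>+t. \<integral>\<^sup>+h. H h * w t * indicator (ball 0 t) h \<partial>lborel \<partial>lborel)"
    unfolding scaled[symmetric] by (rule lborel_pair.Fubini'[symmetric]) measurable
  also have "\<dots> = (\<integral>\<^sup>+h. \<integral>\<^sup>+t. H h * w t * indicator (ball 0 t) h \<partial>lborel \<partial>lborel)"
    by (rule lborel_pair.Fubini') measurable
  also have "\<dots> = (\<integral>\<^sup>+h. ennreal (1 / real n) * (epow (ennreal (norm h)) (- real n) * H h) \<partial>lborel)"
    by (rule nn_integral_cong_AE) (use AE_lborel_singleton[of 0] in \<open>eventually_elim, simp add: tail\<close>)
  also have "\<dots> = ennreal (1 / real n) * (\<integral>\<^sup>+h. epow (ennreal (norm h)) (- real n) * H h \<partial>lborel)"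
    by (rule nn_integral_cmult) measurable
  finally show ?thesis
    using n by (simp add: n_def mult.assoc[symmetric] ennreal_mult[symmetric])
qed

lemma nn_integral_radial:
  fixes \<psi> :: "real \<Rightarrow> ennreal"
  assumes [measurable]: "\<psi> \<in> borel_measurable borel"
  shows "(\<integral>\<^sup>+h. \<psi> (norm h) \<partial>(lborel :: 'a::euclidean_space measure))
       = ennreal (real DIM('a) * omega_n TYPE('a))
         * (\<integral>\<^sup>+r\<in>{0<..}. ennreal (r ^ DIM('a)) * \<psi> r * ennreal (1 / r) \<partial>lborel)"
proof -
  define n where "n = DIM('a)"
  define G where "G r = ennreal (r ^ n) * \<psi> r" for r
  define H where "H h = G (norm h)" for h :: 'a
  have [measurable]: "G \<in> borel_measurable borel" "H \<in> borel_measurable borel"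
    unfolding G_def H_def by measurable
  define J where "J = (\<integral>\<^sup>+r\<in>{0<..}. G r * ennreal (1 / r) \<partial>lborel)"
  have ray: "ray_integral H \<xi> = J" if "\<xi> \<noteq> 0" for \<xi>
  proof -
    have "ray_integral H \<xi> = (\<integral>\<^sup>+t\<in>{0<..}. G (norm \<xi> * t) * ennreal (1 / t) \<partial>lborel)"
      unfolding ray_integral_def H_def
      by (rule nn_integral_cong) (simp add: indicator_def mult.commute)
    also have "\<dots> = J"
      unfolding J_def by (rule nn_integral_dilation) (use that in simp_all)
    finally show ?thesis .
  qed
  have "(\<integral>\<^sup>+h. \<psi> (norm h) \<partial>(lborel :: 'a measure)) = (\<integral>\<^sup>+h. epow (ennreal (norm h)) (- real n) * H h \<partial>lborel)"
  proof (rule nn_integral_cong_AE)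
    show "AE h in lborel. \<psi> (norm h) = epow (ennreal (norm h)) (- real n) * H (h :: 'a)"
      using AE_lborel_singleton[of 0]
      by eventually_elim (simp add: H_def G_def epow_ennreal mult.assoc[symmetric]
          ennreal_mult[symmetric] powr_minus powr_realpow)
  qed
  also have "\<dots> = ennreal (real n) * (\<integral>\<^sup>+\<xi>\<in>ball 0 1. ray_integral H \<xi> \<partial>lborel)"
    unfolding n_def by (rule nn_integral_polar) measurable
  also have "(\<integral>\<^sup>+\<xi>\<in>ball 0 1. ray_integral H \<xi> \<partial>lborel) = (\<integral>\<^sup>+\<xi>\<in>ball (0::'a) 1. J \<partial>lborel)"
    by (rule nn_integral_cong_AE) (use AE_lborel_singleton[of 0] in \<open>eventually_elim, simp add: ray\<close>)
  also have "\<dots> = J * ennreal (omega_n TYPE('a))"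
    using emeasure_ball_omega_n[of 1, where 'a='a] by (simp add: nn_integral_cmult_indicator mult.commute)
  finally show ?thesis
    using omega_n_pos[where 'a='a] by (simp add: J_def G_def n_def ennreal_mult mult_ac)
qed

section \<open>Volume of the star body\<close>

text \<open>With \<open>E h = \<parallel>\<Delta>\<^sub>h f\<parallel>\<^sub>p\<^sup>q\<close> and \<open>\<sigma> = s q\<close>, \<open>gauge_integral E \<sigma> \<xi>\<close> is the \<open>\<sigma>\<close>-th power of the gauge
  of \<open>\<Pi>\<^sup>*\<^sup>,\<^sup>s\<^sub>p\<^sub>,\<^sub>q f\<close>.\<close>

definition gauge_integral :: "('a::real_vector \<Rightarrow> ennreal) \<Rightarrow> real \<Rightarrow> 'a \<Rightarrow> ennreal" where
  "gauge_integral E \<sigma> \<xi> = (\<integral>\<^sup>+t\<in>{0<..}. epow (ennreal t) (- \<sigma>) * E (t *\<^sub>R \<xi>) * ennreal (1 / t) \<partial>lborel)"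

lemma borel_measurable_gauge_integral [measurable]:
  fixes E :: "'a::euclidean_space \<Rightarrow> ennreal"
  assumes [measurable]: "E \<in> borel_measurable borel"
  shows "gauge_integral E \<sigma> \<in> borel_measurable borel"
  unfolding gauge_integral_def by measurable

lemma nn_integral_dilation_powr:
  fixes G :: "real \<Rightarrow> ennreal"
  assumes [measurable]: "G \<in> borel_measurable borel" and l: "0 < l"
  shows "(\<integral>\<^sup>+t\<in>{0<..}. epow (ennreal t) (- \<sigma>) * G (l * t) * ennreal (1 / t) \<partial>lborel)
       = ennreal (l powr \<sigma>) * (\<integral>\<^sup>+t\<in>{0<..}. epow (ennreal t) (- \<sigma>) * G t * ennreal (1 / t) \<partial>lborel)"
proof -
  define F where "F u = epow (ennreal (u / l)) (- \<sigma>) * G u" for u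
  have [measurable]: "F \<in> borel_measurable borel" unfolding F_def by measurable
  have "(\<integral>\<^sup>+t\<in>{0<..}. epow (ennreal t) (- \<sigma>) * G (l * t) * ennreal (1 / t) \<partial>lborel)
      = (\<integral>\<^sup>+t\<in>{0<..}. F (l * t) * ennreal (1 / t) \<partial>lborel)"
    using l by (intro nn_integral_cong) (simp add: F_def indicator_def)
  also have "\<dots> = (\<integral>\<^sup>+t\<in>{0<..}. F t * ennreal (1 / t) \<partial>lborel)"
    by (rule nn_integral_dilation) (use l in simp_all)
  also have "\<dots> = (\<integral>\<^sup>+t\<in>{0<..}. ennreal (l powr \<sigma>) * (epow (ennreal t) (- \<sigma>) * G t * ennreal (1 / t)) \<partial>lborel)"
  proof (intro nn_integral_cong)
    fix t :: real
    have "epow (ennreal (t / l)) (- \<sigma>) = ennreal (l powr \<sigma>) * epow (ennreal t) (- \<sigma>)" if "0 < t"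
      using that l by (simp add: epow_ennreal powr_divide powr_minus field_simps ennreal_mult[symmetric])
    then show "F t * ennreal (1 / t) * indicator {0<..} t
        = ennreal (l powr \<sigma>) * (epow (ennreal t) (- \<sigma>) * G t * ennreal (1 / t)) * indicator {0<..} t"
      by (cases "0 < t") (simp_all add: F_def mult_ac)
  qed
  finally show ?thesis
    by (simp add: nn_integral_cmult mult.assoc)
qed

lemma gauge_integral_scaleR:
  fixes E :: "'a::euclidean_space \<Rightarrow> ennreal"
  assumes [measurable]: "E \<in> borel_measurable borel" and "0 < l"
  shows "gauge_integral E \<sigma> (l *\<^sub>R \<xi>) = ennreal (l powr \<sigma>) * gauge_integral E \<sigma> \<xi>"
  unfolding gauge_integral_def
  using nn_integral_dilation_powr[of "\<lambda>u. E (u *\<^sub>R \<xi>)" l \<sigma>] \<open>0 < l\<close> by (simp add: mult.commute)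

lemma ray_integral_weighted_eq_gauge_integral:
  fixes E :: "'a::euclidean_space \<Rightarrow> ennreal"
  assumes [measurable]: "E \<in> borel_measurable borel" and "\<xi> \<noteq> 0"
  shows "ray_integral (\<lambda>h. ennreal (norm h powr - \<sigma>) * E h) \<xi>
       = ennreal (norm \<xi> powr - \<sigma>) * gauge_integral E \<sigma> \<xi>"
proof -
  have "ennreal (norm (t *\<^sub>R \<xi>) powr - \<sigma>) = ennreal (norm \<xi> powr - \<sigma>) * epow (ennreal t) (- \<sigma>)" if "0 < t" for t
    using that \<open>\<xi> \<noteq> 0\<close> by (simp add: epow_ennreal powr_mult ennreal_mult[symmetric] mult.commute)
  then show ?thesis
    unfolding ray_integral_def gauge_integral_def
    by (subst nn_integral_cmult[symmetric]) (auto intro!: nn_integral_cong simp: indicator_def mult_ac)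
qed

lemma nn_integral_power_interval:
  fixes T :: real and n :: nat
  assumes T: "0 < T" and n: "0 < n"
  shows "(\<integral>\<^sup>+t\<in>{0<..T}. ennreal (t ^ n) * ennreal (1 / t) \<partial>lborel) = ennreal (T ^ n / real n)"
proof -
  have "((\<lambda>t. t powr (real n - 1)) has_integral T ^ n / real n) {0..T}"
    using has_integral_powr_from_0[of "real n - 1" T] T n by (simp add: powr_realpow)
  then have "(\<integral>\<^sup>+t\<in>{0..T}. ennreal (t powr (real n - 1)) \<partial>lborel) = ennreal (T ^ n / real n)"
    using nn_integral_has_integral_lebesgue'[of "{0..T}"] by simp
  moreover have "(\<integral>\<^sup>+t\<in>{0<..T}. ennreal (t ^ n) * ennreal (1 / t) \<partial>lborel)
      = (\<integral>\<^sup>+t\<in>{0..T}. ennreal (t powr (real n - 1)) \<partial>lborel)"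
  proof (rule nn_integral_cong_AE)
    have power_eq: "ennreal (t ^ n) * ennreal (1 / t) = ennreal (t powr (real n - 1))" if "0 < t" for t
      using that by (simp add: ennreal_mult[symmetric] powr_diff powr_realpow divide_inverse)
    show "AE t in lborel. ennreal (t ^ n) * ennreal (1 / t) * indicator {0<..T} t
        = ennreal (t powr (real n - 1)) * indicator {0..T} t"
      using AE_lborel_singleton[of 0] by eventually_elim (auto simp: indicator_def power_eq)
  qed
  ultimately show ?thesis by simp
qed

lemma nn_integral_power_infinite:
  fixes n :: nat
  assumes n: "0 < n"
  shows "(\<integral>\<^sup>+t\<in>{0<..}. ennreal (t ^ n) * ennreal (1 / t) \<partial>lborel) = \<infinity>"
proof (rule ccontr)
  assume "(\<integral>\<^sup>+t\<in>{0<..}. ennreal (t ^ n) * ennreal (1 / t) \<partial>lborel) \<noteq> \<infinity>"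
  then obtain x where x: "(\<integral>\<^sup>+t\<in>{0<..}. ennreal (t ^ n) * ennreal (1 / t) \<partial>lborel) = ennreal x" "0 \<le> x"
    by (cases "\<integral>\<^sup>+t\<in>{0<..}. ennreal (t ^ n) * ennreal (1 / t) \<partial>lborel") auto
  define T where "T = real n * (x + 1) + 1"
  have T: "1 \<le> T" using x n by (simp add: T_def)
  have "ennreal (T ^ n / real n) = (\<integral>\<^sup>+t\<in>{0<..T}. ennreal (t ^ n) * ennreal (1 / t) \<partial>lborel)"
    using T by (simp add: nn_integral_power_interval n)
  also have "\<dots> \<le> ennreal x"
    unfolding x(1)[symmetric] by (intro nn_integral_mono) (auto simp: indicator_def)
  finally have "T ^ n / real n \<le> x" using x by simp
  moreover have "T \<le> T ^ n" using T n by (metis One_nat_def Suc_leI power_increasing power_one_right)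
  ultimately show False
    using n by (simp add: T_def field_simps)
qed

lemma nn_integral_power_sublevel:
  fixes \<phi> :: ennreal and \<sigma> :: real and n :: nat
  assumes \<sigma>: "0 < \<sigma>" and n: "0 < n"
  shows "(\<integral>\<^sup>+t\<in>{0<..}. ennreal (t ^ n) * indicator {t. ennreal (t powr \<sigma>) * \<phi> \<le> 1} t * ennreal (1 / t) \<partial>lborel)
       = ennreal (1 / real n) * epow \<phi> (- (real n / \<sigma>))"
proof (cases \<phi> rule: epow_cases)
  case 1
  then show ?thesis
    using nn_integral_power_infinite[OF n] \<sigma> n by (simp add: ennreal_mult_top)
next
  case 2
  have "ennreal (t ^ n) * indicator {t. ennreal (t powr \<sigma>) * \<phi> \<le> 1} t * ennreal (1 / t) * indicator {0<..} t = 0"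
    for t :: real
    by (cases "0 < t") (simp_all add: 2 indicator_def ennreal_mult_top top_unique)
  then have "(\<integral>\<^sup>+t\<in>{0<..}. ennreal (t ^ n) * indicator {t. ennreal (t powr \<sigma>) * \<phi> \<le> 1} t * ennreal (1 / t) \<partial>lborel)
      = (\<integral>\<^sup>+t. 0 \<partial>(lborel :: real measure))"
    by (simp only:)
  then show ?thesis using 2 \<sigma> n by (simp add: epow_def divide_neg_pos not_less)
next
  case (3 y)
  define T where "T = y powr (- 1 / \<sigma>)"
  have T: "0 < T" using 3 by (simp add: T_def)
  have "ennreal (t powr \<sigma>) * \<phi> \<le> 1 \<longleftrightarrow> t \<le> T" if "0 < t" for t
  proof -
    have "T powr \<sigma> = y powr ((- 1 / \<sigma>) * \<sigma>)"
      unfolding T_def by (rule powr_powr)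
    then have "T powr \<sigma> = 1 / y"
      using 3 \<sigma> by (simp add: powr_minus divide_inverse)
    then have "ennreal (t powr \<sigma>) * \<phi> \<le> 1 \<longleftrightarrow> t powr \<sigma> \<le> T powr \<sigma>"
      using 3 that by (simp add: ennreal_mult[symmetric] pos_le_divide_eq)
    also have "\<dots> \<longleftrightarrow> t \<le> T" using that T \<sigma> by (simp add: powr_le_powr_iff)
    finally show ?thesis .
  qed
  then have "(\<integral>\<^sup>+t\<in>{0<..}. ennreal (t ^ n) * indicator {t. ennreal (t powr \<sigma>) * \<phi> \<le> 1} t * ennreal (1 / t) \<partial>lborel)
      = (\<integral>\<^sup>+t\<in>{0<..T}. ennreal (t ^ n) * ennreal (1 / t) \<partial>lborel)"
    by (intro nn_integral_cong) (auto simp: indicator_def)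
  also have "\<dots> = ennreal (T ^ n / real n)" by (rule nn_integral_power_interval[OF T n])
  also have "T ^ n = y powr (- (real n / \<sigma>))"
    using 3 by (simp add: T_def powr_realpow[symmetric] powr_powr)
  finally show ?thesis
    using 3 by (simp add: epow_ennreal ennreal_mult[symmetric] divide_inverse mult.commute)
qed

lemma ray_integral_gauge_sublevel:
  fixes E :: "'a::euclidean_space \<Rightarrow> ennreal"
  assumes [measurable]: "E \<in> borel_measurable borel" and \<sigma>: "0 < \<sigma>" and "\<xi> \<noteq> 0"
  shows "ray_integral (\<lambda>h. ennreal (norm h ^ DIM('a)) * indicator {\<zeta>. gauge_integral E \<sigma> \<zeta> \<le> 1} h) \<xi>
       = ennreal (1 / real DIM('a))
         * epow (ennreal (norm \<xi> powr - \<sigma>) * gauge_integral E \<sigma> \<xi>) (- (real DIM('a) / \<sigma>))"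
proof -
  define n where "n = DIM('a)"
  have n: "0 < n" by (simp add: n_def)
  have \<rho>: "0 < norm \<xi>" using \<open>\<xi> \<noteq> 0\<close> by simp
  let ?\<phi> = "gauge_integral E \<sigma> \<xi>"
  have "ray_integral (\<lambda>h. ennreal (norm h ^ n) * indicator {\<zeta>. gauge_integral E \<sigma> \<zeta> \<le> 1} h) \<xi>
      = (\<integral>\<^sup>+t\<in>{0<..}. ennreal (norm \<xi> ^ n)
           * (ennreal (t ^ n) * indicator {t. ennreal (t powr \<sigma>) * ?\<phi> \<le> 1} t * ennreal (1 / t)) \<partial>lborel)"
    unfolding ray_integral_def
    by (intro nn_integral_cong)
      (auto simp: indicator_def gauge_integral_scaleR power_mult_distrib ennreal_mult mult_ac)
  also have "\<dots> = ennreal (norm \<xi> ^ n) * (\<integral>\<^sup>+t\<in>{0<..}.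
      ennreal (t ^ n) * indicator {t. ennreal (t powr \<sigma>) * ?\<phi> \<le> 1} t * ennreal (1 / t) \<partial>lborel)"
    by (subst nn_integral_cmult[symmetric]) (auto simp: mult_ac)
  also have "\<dots> = ennreal (norm \<xi> ^ n) * (ennreal (1 / real n) * epow ?\<phi> (- (real n / \<sigma>)))"
    by (simp only: nn_integral_power_sublevel[OF \<sigma> n])
  also have "\<dots> = ennreal (1 / real n)
      * (ennreal ((norm \<xi> powr - \<sigma>) powr (- (real n / \<sigma>))) * epow ?\<phi> (- (real n / \<sigma>)))"
    using \<rho> \<sigma> by (simp add: powr_powr powr_realpow mult_ac)
  also have "\<dots> = ennreal (1 / real n) * epow (ennreal (norm \<xi> powr - \<sigma>) * ?\<phi>) (- (real n / \<sigma>))"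
    using \<rho> by (subst epow_mult_const) simp_all
  finally show ?thesis
    unfolding n_def .
qed

lemma emeasure_gauge_sublevel:
  fixes E :: "'a::euclidean_space \<Rightarrow> ennreal"
  assumes [measurable]: "E \<in> borel_measurable borel" and \<sigma>: "0 < \<sigma>"
  shows "emeasure lborel {\<xi>. gauge_integral E \<sigma> \<xi> \<le> 1}
       = (\<integral>\<^sup>+\<xi>\<in>ball 0 1. epow (ennreal (norm \<xi> powr - \<sigma>) * gauge_integral E \<sigma> \<xi>) (- (real DIM('a) / \<sigma>)) \<partial>lborel)"
proof -
  define n where "n = DIM('a)"
  have n: "0 < n" by (simp add: n_def)
  define K where "K = {\<xi>::'a. gauge_integral E \<sigma> \<xi> \<le> 1}"
  have [measurable]: "K \<in> sets borel" unfolding K_def by measurable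
  define H where "H = (\<lambda>h::'a. ennreal (norm h ^ n) * indicator K h)"
  have [measurable]: "H \<in> borel_measurable borel" unfolding H_def by measurable
  have "emeasure lborel K = (\<integral>\<^sup>+h. indicator K h \<partial>lborel)"
    by (rule nn_integral_indicator[symmetric]) simp
  also have "\<dots> = (\<integral>\<^sup>+h. epow (ennreal (norm h)) (- real n) * H h \<partial>lborel)"
    by (intro nn_integral_cong_AE, use AE_lborel_singleton[of 0] in eventually_elim)
      (simp add: H_def epow_ennreal mult.assoc[symmetric] ennreal_mult[symmetric] powr_minus powr_realpow)
  also have "\<dots> = ennreal (real n) * (\<integral>\<^sup>+\<xi>\<in>ball 0 1. ray_integral H \<xi> \<partial>lborel)"
    unfolding n_def by (rule nn_integral_polar) measurable
  also have "\<dots> = ennreal (real n) * (\<integral>\<^sup>+\<xi>\<in>ball 0 1. ennreal (1 / real n)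
      * epow (ennreal (norm \<xi> powr - \<sigma>) * gauge_integral E \<sigma> \<xi>) (- (real n / \<sigma>)) \<partial>lborel)"
    by (intro arg_cong2[where f="(*)"] refl nn_integral_cong_AE, use AE_lborel_singleton[of 0] in eventually_elim)
      (simp add: H_def K_def n_def ray_integral_gauge_sublevel[OF assms])
  also have "\<dots> = ennreal (real n) * ennreal (1 / real n) * (\<integral>\<^sup>+\<xi>\<in>ball 0 1.
      epow (ennreal (norm \<xi> powr - \<sigma>) * gauge_integral E \<sigma> \<xi>) (- (real n / \<sigma>)) \<partial>lborel)"
    by (simp add: mult.assoc nn_integral_cmult)
  finally show ?thesis
    using n by (simp add: K_def n_def ennreal_mult[symmetric])
qed

lemma nn_integral_weighted_eq_gauge_integral:
  fixes E :: "'a::euclidean_space \<Rightarrow> ennreal"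
  assumes [measurable]: "E \<in> borel_measurable borel"
  shows "(\<integral>\<^sup>+h. epow (ennreal (norm h)) (- \<sigma>) * E h * epow (ennreal (norm h)) (- real DIM('a)) \<partial>lborel)
       = ennreal (real DIM('a)) * (\<integral>\<^sup>+\<xi>\<in>ball 0 1. ennreal (norm \<xi> powr - \<sigma>) * gauge_integral E \<sigma> \<xi> \<partial>lborel)"
proof -
  define H where "H = (\<lambda>h::'a. ennreal (norm h powr - \<sigma>) * E h)"
  have [measurable]: "H \<in> borel_measurable borel" unfolding H_def by measurable
  have "(\<integral>\<^sup>+h. epow (ennreal (norm h)) (- \<sigma>) * E h * epow (ennreal (norm h)) (- real DIM('a)) \<partial>lborel)
      = (\<integral>\<^sup>+h. epow (ennreal (norm h)) (- real DIM('a)) * H h \<partial>lborel)"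
    by (intro nn_integral_cong_AE, use AE_lborel_singleton[of 0] in eventually_elim)
      (simp add: H_def epow_ennreal mult_ac)
  also have "\<dots> = ennreal (real DIM('a)) * (\<integral>\<^sup>+\<xi>\<in>ball 0 1. ray_integral H \<xi> \<partial>lborel)"
    by (rule nn_integral_polar) measurable
  also have "(\<integral>\<^sup>+\<xi>\<in>ball 0 1. ray_integral H \<xi> \<partial>lborel)
      = (\<integral>\<^sup>+\<xi>\<in>ball 0 1. ennreal (norm \<xi> powr - \<sigma>) * gauge_integral E \<sigma> \<xi> \<partial>lborel)"
    by (intro nn_integral_cong_AE, use AE_lborel_singleton[of 0] in eventually_elim)
      (simp add: H_def ray_integral_weighted_eq_gauge_integral[OF assms])
  finally show ?thesis .
qed

lemma powr_neg_tangent_bound: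
  fixes z r :: real
  assumes z: "0 < z" and r: "0 < r"
  shows "1 + r \<le> z powr (- r) + r * z"
proof -
  have "(z powr (- r)) powr (1 / (1 + r)) * z powr (r / (1 + r))
      \<le> (1 / (1 + r)) * z powr (- r) + (r / (1 + r)) * z"
    by (rule Youngs_inequality_0) (use z r in \<open>auto simp: field_simps\<close>)
  moreover have "(z powr (- r)) powr (1 / (1 + r)) * z powr (r / (1 + r)) = 1"
    using z r by (simp add: powr_powr powr_add[symmetric])
  ultimately show ?thesis
    using r by (simp add: add_divide_distrib[symmetric] le_divide_eq)
qed

lemma epow_neg_tangent_bound:
  fixes m r :: real and x :: ennreal
  assumes m: "0 < m" and r: "0 < r"
  shows "ennreal ((1 + r) * m powr (- r)) \<le> epow x (- r) + ennreal (r * m powr (- r - 1)) * x"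
proof (cases x rule: epow_cases)
  case (3 y)
  define z where "z = y / m"
  have z: "0 < z" and y: "y = m * z" using 3 m by (simp_all add: z_def)
  have "(1 + r) * m powr (- r) \<le> (z powr (- r) + r * z) * m powr (- r)"
    using powr_neg_tangent_bound[OF z r] by (rule mult_right_mono) simp
  also have "\<dots> = y powr (- r) + r * m powr (- r - 1) * y"
    using m z unfolding y by (simp add: powr_mult powr_diff powr_minus field_simps)
  finally show ?thesis
    using 3 r m by (simp add: epow_ennreal ennreal_mult[symmetric] ennreal_plus[symmetric] del: ennreal_plus)
qed (use r m in \<open>simp_all add: ennreal_mult_top\<close>)

text \<open>Jensen's inequality for \<open>x \<mapsto> x\<^sup>-\<^sup>r\<close>: integrate the tangent line at the mean \<open>m\<close> of \<open>a\<close>.\<close>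

lemma nn_integral_neg_power_ge_mean:
  fixes a :: "'b \<Rightarrow> ennreal"
  assumes [measurable]: "a \<in> borel_measurable M"
    and V: "emeasure M (space M) = ennreal V" "0 < V" and r: "0 < r" and m: "0 < m"
    and mean: "(\<integral>\<^sup>+x. a x \<partial>M) = ennreal (m * V)"
  shows "ennreal (m powr (- r) * V) \<le> (\<integral>\<^sup>+x. epow (a x) (- r) \<partial>M)"
proof -
  define J where "J = (\<integral>\<^sup>+x. epow (a x) (- r) \<partial>M)"
  have "ennreal (m powr (- r) * V) + ennreal (r * m powr (- r) * V) = ennreal ((1 + r) * m powr (- r) * V)"
    using m V r by (simp add: ennreal_plus[symmetric] algebra_simps del: ennreal_plus)
  also have "\<dots> = (\<integral>\<^sup>+x. ennreal ((1 + r) * m powr (- r)) \<partial>M)"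
    using V m r by (simp add: ennreal_mult[symmetric] mult.commute)
  also have "\<dots> \<le> (\<integral>\<^sup>+x. epow (a x) (- r) + ennreal (r * m powr (- r - 1)) * a x \<partial>M)"
    by (intro nn_integral_mono epow_neg_tangent_bound m r)
  also have "\<dots> = J + ennreal (r * m powr (- r - 1)) * ennreal (m * V)"
    unfolding J_def mean[symmetric] by (subst nn_integral_add) (auto simp: nn_integral_cmult)
  also have "ennreal (r * m powr (- r - 1)) * ennreal (m * V) = ennreal (r * m powr (- r) * V)"
    using m V r by (simp add: ennreal_mult[symmetric] powr_diff powr_minus field_simps)
  finally show ?thesis
    by (simp add: J_def ennreal_add_left_cancel_le add.commute[of J])
qed

lemma nn_integral_power_mean:
  fixes a :: "'b \<Rightarrow> ennreal"
  assumes [measurable]: "a \<in> borel_measurable M"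
    and V: "emeasure M (space M) = ennreal V" "0 < V" and r: "0 < r"
  shows "ennreal (V powr (1 + 1 / r)) * epow (\<integral>\<^sup>+x. epow (a x) (- r) \<partial>M) (- 1 / r) \<le> (\<integral>\<^sup>+x. a x \<partial>M)"
proof -
  define J where "J = (\<integral>\<^sup>+x. epow (a x) (- r) \<partial>M)"
  show ?thesis
  proof (cases "\<integral>\<^sup>+x. a x \<partial>M" rule: epow_cases)
    case 1
    then have "AE x in M. a x = 0"
      by (simp add: nn_integral_0_iff_AE)
    then have "AE x in M. epow (a x) (- r) = \<infinity>"
      by eventually_elim (use r in simp)
    then have "J = (\<integral>\<^sup>+x. \<infinity> \<partial>M)" unfolding J_def by (rule nn_integral_cong_AE)
    then have "J = \<infinity>" using V by (simp add: ennreal_mult_top)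
    then show ?thesis using r by (simp add: J_def epow_def)
  next
    case 2
    then show ?thesis by simp
  next
    case (3 \<alpha>)
    define m where "m = \<alpha> / V"
    have m: "0 < m" and \<alpha>: "\<alpha> = m * V" using 3 V by (simp_all add: m_def)
    have "epow J (- 1 / r) \<le> epow (ennreal (m powr (- r) * V)) (- 1 / r)"
      using nn_integral_neg_power_ge_mean[OF _ V r m] 3 r unfolding J_def \<alpha>
      by (intro epow_antimono) simp_all
    also have "\<dots> = ennreal (m * V powr (- 1 / r))"
      using m V r by (simp add: epow_ennreal powr_mult powr_powr)
    finally have "ennreal (V powr (1 + 1 / r)) * epow J (- 1 / r)
        \<le> ennreal (V powr (1 + 1 / r)) * ennreal (m * V powr (- 1 / r))"
      by (rule mult_left_mono) simp
    also have "\<dots> = ennreal \<alpha>"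
      using m V r unfolding \<alpha> by (simp add: ennreal_mult[symmetric] powr_add[symmetric] mult_ac)
    finally show ?thesis
      using 3 by (simp add: J_def)
  qed
qed

lemma gauge_sublevel_volume_le:
  fixes E :: "'a::euclidean_space \<Rightarrow> ennreal" and \<sigma> :: real
  assumes [measurable]: "E \<in> borel_measurable borel" and \<sigma>: "0 < \<sigma>"
  shows "ennreal (real DIM('a) * omega_n TYPE('a) powr ((real DIM('a) + \<sigma>) / real DIM('a)))
           * epow (emeasure lborel {\<xi>. gauge_integral E \<sigma> \<xi> \<le> 1}) (- \<sigma> / real DIM('a))
         \<le> (\<integral>\<^sup>+h. epow (ennreal (norm h)) (- \<sigma>) * E h * epow (ennreal (norm h)) (- real DIM('a)) \<partial>lborel)"
proof -
  define n where "n = DIM('a)"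
  have n: "0 < n" by (simp add: n_def)
  define \<omega> where "\<omega> = omega_n TYPE('a)"
  define a where "a \<xi> = ennreal (norm \<xi> powr - \<sigma>) * gauge_integral E \<sigma> \<xi>" for \<xi> :: 'a
  have [measurable]: "a \<in> borel_measurable borel" unfolding a_def by measurable
  define M where "M = density lborel (indicator (ball (0::'a) 1) :: 'a \<Rightarrow> ennreal)"
  have [measurable]: "a \<in> borel_measurable M" unfolding M_def by measurable
  have M_integral: "(\<integral>\<^sup>+\<xi>. g \<xi> \<partial>M) = (\<integral>\<^sup>+\<xi>\<in>ball 0 1. g \<xi> \<partial>lborel)"
    if [measurable]: "g \<in> borel_measurable borel" for g
    unfolding M_def by (subst nn_integral_density) (auto simp: mult.commute)
  have "emeasure M (space M) = ennreal \<omega>"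
    using emeasure_ball_omega_n[of 1, where 'a='a]
    by (simp add: M_def emeasure_density nn_integral_indicator \<omega>_def)
  then have jensen: "ennreal (\<omega> powr (1 + \<sigma> / real n)) * epow (\<integral>\<^sup>+\<xi>. epow (a \<xi>) (- (real n / \<sigma>)) \<partial>M) (- \<sigma> / real n)
      \<le> (\<integral>\<^sup>+\<xi>. a \<xi> \<partial>M)"
    using nn_integral_power_mean[of a M \<omega> "real n / \<sigma>"] omega_n_pos[where 'a='a] n \<sigma>
    by (simp add: \<omega>_def)
  have volume: "emeasure lborel {\<xi>. gauge_integral E \<sigma> \<xi> \<le> 1} = (\<integral>\<^sup>+\<xi>. epow (a \<xi>) (- (real n / \<sigma>)) \<partial>M)"
    by (simp add: emeasure_gauge_sublevel[OF assms] M_integral a_def n_def)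
  have weighted: "(\<integral>\<^sup>+h. epow (ennreal (norm h)) (- \<sigma>) * E h * epow (ennreal (norm h)) (- real n) \<partial>lborel)
      = ennreal (real n) * (\<integral>\<^sup>+\<xi>. a \<xi> \<partial>M)"
    by (simp add: nn_integral_weighted_eq_gauge_integral[OF assms(1)] M_integral a_def n_def)
  have "1 + \<sigma> / real n = (real n + \<sigma>) / real n" using n by (simp add: field_simps)
  then show ?thesis
    using mult_left_mono[OF jensen, of "ennreal (real n)"] omega_n_pos[where 'a='a]
    unfolding n_def[symmetric] \<omega>_def[symmetric] volume weighted
    by (simp add: ennreal_mult mult.assoc)
qed

section \<open>Comparison with the Besov seminorm\<close>

text \<open>Fubini in \<open>(x, h)\<close> needs \<open>(x, h) \<mapsto> f (x + h) - f x\<close> to be measurable, which holds for Borel but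
  not for Lebesgue measurable \<open>f\<close>; hence \<open>f\<close> is replaced by a Borel representative.\<close>

definition diff_pow :: "('a::euclidean_space \<Rightarrow> real) \<Rightarrow> real \<Rightarrow> 'a \<Rightarrow> ennreal" where
  "diff_pow g p h = (\<integral>\<^sup>+x. ennreal (\<bar>g (x + h) - g x\<bar> powr p) \<partial>lborel)"

lemma borel_measurable_diff_pow [measurable]:
  assumes [measurable]: "g \<in> borel_measurable borel"
  shows "diff_pow g p \<in> borel_measurable borel"
  unfolding diff_pow_def by measurable

lemma diffLp_pow_eq_diff_pow_borel:
  fixes f :: "'a::euclidean_space \<Rightarrow> real"
  assumes "f \<in> borel_measurable lebesgue"
  obtains g where "g \<in> borel_measurable borel" "diffLp_pow f p = diff_pow g p"
proof -
  obtain g where g: "g \<in> borel_measurable lborel" and ae: "AE x in lborel. f x = g x"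
    using completion_ex_borel_measurable_real[OF assms] by blast
  have [measurable]: "g \<in> borel_measurable borel" using g by simp
  obtain N where N: "{x \<in> space lborel. f x \<noteq> g x} \<subseteq> N" "N \<in> null_sets lborel"
    by (rule AE_E[OF ae]) blast
  have [measurable]: "N \<in> sets borel" using N(2) by (simp add: null_sets_def)
  have AE_notin: "AE x in lborel. x \<notin> N" using N(2) by (rule AE_not_in)
  have AE_shift_notin: "AE x in lborel. x + h \<notin> N" for h :: 'a
  proof -
    have "AE x in distr lborel borel ((+) h). x \<notin> N"
      using AE_notin by (simp only: lborel_distr_plus[of h])
    then show ?thesis by (subst (asm) AE_distr_iff) (auto simp: add.commute)
  qed
  have "diffLp_pow f p h = diff_pow g p h" for h
  proof -
    have "AE x in lborel. f (x + h) = g (x + h) \<and> f x = g x"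
      using AE_shift_notin[of h] AE_notin by eventually_elim (use N(1) in auto)
    then have "AE x in lebesgue. ennreal (\<bar>f (x + h) - f x\<bar> powr p) = ennreal (\<bar>g (x + h) - g x\<bar> powr p)"
      by (rule AE_completion[OF AE_mp]) auto
    then have "diffLp_pow f p h = (\<integral>\<^sup>+x. ennreal (\<bar>g (x + h) - g x\<bar> powr p) \<partial>lebesgue)"
      unfolding diffLp_pow_def by (rule nn_integral_cong_AE)
    then show ?thesis by (simp add: diff_pow_def nn_integral_completion)
  qed
  then show ?thesis using that[of g] by fastforce
qed

lemma powr_add_le:
  fixes a b p :: real
  assumes a: "0 \<le> a" and b: "0 \<le> b" and p: "1 \<le> p"
  shows "(a + b) powr p \<le> 2 powr (p - 1) * (a powr p + b powr p)"
proof (cases "a = 0 \<or> b = 0")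
  case True
  have "1 \<le> 2 powr (p - 1)" using p by (simp add: ge_one_powr_ge_zero)
  then show ?thesis
    using True a b by (auto intro: order_trans[OF _ mult_right_mono[of 1]])
next
  case False
  then have "((1 / 2) * a + (1 / 2) * b) powr p \<le> (1 / 2) * a powr p + (1 / 2) * b powr p"
    using convex_onD[OF powr_convex[OF p], of "1 / 2" a b] a b by simp
  then have "(a + b) powr p / 2 powr p \<le> (a powr p + b powr p) / 2"
    using a b by (simp add: powr_divide add_divide_distrib[symmetric])
  then show ?thesis
    by (simp add: powr_diff field_simps)
qed

lemma diff_pow_triangle:
  fixes g :: "'a::euclidean_space \<Rightarrow> real"
  assumes [measurable]: "g \<in> borel_measurable borel" and p: "1 \<le> p"
  shows "diff_pow g p h \<le> ennreal (2 powr (p - 1)) * (diff_pow g p k + diff_pow g p (h - k))"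
proof -
  have pointwise: "ennreal (\<bar>g (x + h) - g x\<bar> powr p)
      \<le> ennreal (2 powr (p - 1)) * (ennreal (\<bar>g (x + k) - g x\<bar> powr p) + ennreal (\<bar>g (x + h) - g (x + k)\<bar> powr p))" for x
  proof -
    have "\<bar>g (x + h) - g x\<bar> powr p \<le> (\<bar>g (x + k) - g x\<bar> + \<bar>g (x + h) - g (x + k)\<bar>) powr p"
      using p by (intro powr_mono2) auto
    also have "\<dots> \<le> 2 powr (p - 1) * (\<bar>g (x + k) - g x\<bar> powr p + \<bar>g (x + h) - g (x + k)\<bar> powr p)"
      by (rule powr_add_le) (use p in auto)
    finally show ?thesis
      by (simp add: ennreal_mult[symmetric] ennreal_plus[symmetric] del: ennreal_plus)
  qed
  have shifted: "(\<integral>\<^sup>+x. ennreal (\<bar>g (x + h) - g (x + k)\<bar> powr p) \<partial>lborel) = diff_pow g p (h - k)"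
    unfolding diff_pow_def
    using nn_integral_lborel_translate[of "\<lambda>x. ennreal (\<bar>g (x + (h - k)) - g x\<bar> powr p)" k]
    by (simp add: algebra_simps)
  have "diff_pow g p h \<le> (\<integral>\<^sup>+x. ennreal (2 powr (p - 1)) * (ennreal (\<bar>g (x + k) - g x\<bar> powr p)
      + ennreal (\<bar>g (x + h) - g (x + k)\<bar> powr p)) \<partial>lborel)"
    unfolding diff_pow_def by (intro nn_integral_mono pointwise)
  also have "\<dots> = ennreal (2 powr (p - 1)) * (diff_pow g p k + diff_pow g p (h - k))"
    by (simp add: nn_integral_cmult nn_integral_add shifted diff_pow_def)
  finally show ?thesis .
qed

lemma nn_integral_ball_reflect_le:
  fixes F :: "'a::euclidean_space \<Rightarrow> ennreal"
  assumes [measurable]: "F \<in> borel_measurable borel"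
  shows "(\<integral>\<^sup>+k\<in>ball 0 r. F (h - k) \<partial>lborel) \<le> (\<integral>\<^sup>+k\<in>ball 0 (norm h + r). F k \<partial>lborel)"
proof -
  have "(\<integral>\<^sup>+k\<in>ball 0 r. F (h - k) \<partial>lborel) = (\<integral>\<^sup>+k. F k * indicator (ball 0 r) (h - k) \<partial>lborel)"
    using nn_integral_lborel_affine[of "\<lambda>k. F k * indicator (ball 0 r) (h - k)" "-1" h] by simp
  also have "\<dots> \<le> (\<integral>\<^sup>+k\<in>ball 0 (norm h + r). F k \<partial>lborel)"
  proof (intro nn_integral_mono)
    have "norm k < norm h + r" if "norm (h - k) < r" for k
      using norm_triangle_ineq[of h "k - h"] that by (simp add: norm_minus_commute)
    then show "F k * indicator (ball 0 r) (h - k) \<le> F k * indicator (ball 0 (norm h + r)) k" for k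
      by (auto simp: indicator_def)
  qed
  finally show ?thesis .
qed

definition ball_average :: "('a::euclidean_space \<Rightarrow> ennreal) \<Rightarrow> real \<Rightarrow> ennreal" where
  "ball_average D t = ennreal (1 / (t ^ DIM('a) * omega_n TYPE('a))) * (\<integral>\<^sup>+h\<in>ball 0 t. D h \<partial>lborel)"

lemma borel_measurable_ball_average [measurable]:
  fixes D :: "'a::euclidean_space \<Rightarrow> ennreal"
  assumes [measurable]: "D \<in> borel_measurable borel"
  shows "ball_average D \<in> borel_measurable borel"
  unfolding ball_average_def by measurable

lemma ennreal_le_divide_left:
  assumes "0 < a" "ennreal a * x \<le> y"
  shows "x \<le> ennreal (1 / a) * y"
proof -
  have "x = ennreal (1 / a) * (ennreal a * x)"
    using assms(1) by (simp add: mult.assoc[symmetric] ennreal_mult[symmetric])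
  also have "\<dots> \<le> ennreal (1 / a) * y"
    using assms(2) by (rule mult_left_mono) simp
  finally show ?thesis .
qed

lemma diff_pow_ball_integral_bound:
  fixes g :: "'a::euclidean_space \<Rightarrow> real"
  assumes [measurable]: "g \<in> borel_measurable borel" and p: "1 \<le> p"
  shows "ennreal (norm h ^ DIM('a) * omega_n TYPE('a)) * diff_pow g p h
       \<le> ennreal (2 powr p) * (\<integral>\<^sup>+k\<in>ball 0 (2 * norm h). diff_pow g p k \<partial>lborel)"
proof -
  define r where "r = norm h"
  define D where "D = diff_pow g p"
  have D_measurable [measurable]: "D \<in> borel_measurable borel" unfolding D_def by measurable
  define Y where "Y = (\<integral>\<^sup>+k\<in>ball 0 (2 * r). D k \<partial>lborel)"
  have "ennreal (r ^ DIM('a) * omega_n TYPE('a)) * D h = (\<integral>\<^sup>+k\<in>ball (0::'a) r. D h \<partial>lborel)"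
    using emeasure_ball_omega_n[of r, where 'a='a] by (simp add: nn_integral_cmult_indicator r_def mult.commute)
  also have "\<dots> \<le> (\<integral>\<^sup>+k\<in>ball (0::'a) r. ennreal (2 powr (p - 1)) * (D k + D (h - k)) \<partial>lborel)"
    unfolding D_def by (intro nn_integral_mono mult_right_mono diff_pow_triangle p) simp_all
  also have "\<dots> = (\<integral>\<^sup>+k. ennreal (2 powr (p - 1))
      * (D k * indicator (ball 0 r) k + D (h - k) * indicator (ball 0 r) k) \<partial>lborel)"
    by (intro nn_integral_cong) (simp add: distrib_left distrib_right mult_ac)
  also have "\<dots> = ennreal (2 powr (p - 1))
      * ((\<integral>\<^sup>+k\<in>ball 0 r. D k \<partial>lborel) + (\<integral>\<^sup>+k\<in>ball 0 r. D (h - k) \<partial>lborel))"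
    by (simp add: nn_integral_cmult nn_integral_add)
  also have "\<dots> \<le> ennreal (2 powr (p - 1)) * (Y + Y)"
  proof (intro mult_left_mono add_mono)
    have "norm k < 2 * r" if "norm k < r" for k :: 'a
      using that norm_ge_zero[of k] by linarith
    then have "indicator (ball 0 r) k \<le> (indicator (ball 0 (2 * r)) k :: ennreal)" for k :: 'a
      by (auto simp: indicator_def)
    then show "(\<integral>\<^sup>+k\<in>ball 0 r. D k \<partial>lborel) \<le> Y"
      unfolding Y_def by (intro nn_integral_mono mult_left_mono) simp_all
    have "norm h + r = 2 * r" by (simp add: r_def)
    then show "(\<integral>\<^sup>+k\<in>ball 0 r. D (h - k) \<partial>lborel) \<le> Y"
      using nn_integral_ball_reflect_le[OF D_measurable, of h r] by (simp only: Y_def)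
  qed simp_all
  also have "\<dots> = ennreal (2 powr (p - 1)) * ennreal 2 * Y"
    by (simp add: mult_2[symmetric] mult.assoc mult.commute[of 2])
  also have "ennreal (2 powr (p - 1)) * ennreal 2 = ennreal (2 powr (p - 1) * 2)"
    by (rule ennreal_mult[symmetric]) auto
  also have "2 powr (p - 1) * 2 = (2::real) powr p"
    by (simp add: powr_diff)
  finally show ?thesis
    by (simp add: D_def Y_def r_def)
qed

lemma diff_pow_le_ball_average:
  fixes g :: "'a::euclidean_space \<Rightarrow> real"
  assumes [measurable]: "g \<in> borel_measurable borel" and p: "1 \<le> p" and "h \<noteq> 0"
  shows "diff_pow g p h \<le> ennreal (2 powr p * 2 ^ DIM('a)) * ball_average (diff_pow g p) (2 * norm h)"
proof -
  define a where "a = norm h ^ DIM('a) * omega_n TYPE('a)"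
  have a: "0 < a" using \<open>h \<noteq> 0\<close> omega_n_pos[where 'a='a] by (simp add: a_def)
  have factor: "ennreal (1 / a) * ennreal (2 powr p)
      = ennreal (2 powr p * 2 ^ DIM('a)) * ennreal (1 / ((2 * norm h) ^ DIM('a) * omega_n TYPE('a)))"
    using a omega_n_pos[where 'a='a]
    by (simp add: a_def ennreal_mult[symmetric] power_mult_distrib field_simps)
  have "diff_pow g p h \<le> ennreal (1 / a)
      * (ennreal (2 powr p) * (\<integral>\<^sup>+k\<in>ball 0 (2 * norm h). diff_pow g p k \<partial>lborel))"
    using ennreal_le_divide_left[OF a] diff_pow_ball_integral_bound[OF assms(1) p, of h] by (simp add: a_def)
  then show ?thesis
    unfolding ball_average_def by (simp only: mult.assoc[symmetric] factor)
qed

lemma nn_integral_weighted_le_radial_majorant: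
  fixes E :: "'a::euclidean_space \<Rightarrow> ennreal" and X :: "real \<Rightarrow> ennreal"
  assumes [measurable]: "E \<in> borel_measurable borel" "X \<in> borel_measurable borel"
    and c: "0 \<le> c" and bound: "\<And>h. h \<noteq> 0 \<Longrightarrow> E h \<le> ennreal c * X (2 * norm h)"
  shows "(\<integral>\<^sup>+h. epow (ennreal (norm h)) (- \<sigma>) * E h * epow (ennreal (norm h)) (- real DIM('a)) \<partial>lborel)
       \<le> ennreal (real DIM('a) * omega_n TYPE('a)) * ennreal c * ennreal (2 powr \<sigma>)
         * (\<integral>\<^sup>+t\<in>{0<..}. epow (ennreal t) (- \<sigma>) * X t * ennreal (1 / t) \<partial>lborel)"
proof -
  define n where "n = DIM('a)"
  define \<psi> where "\<psi> r = ennreal c * (epow (ennreal r) (- \<sigma>) * X (2 * r) * epow (ennreal r) (- real n))" for r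
  have [measurable]: "\<psi> \<in> borel_measurable borel" unfolding \<psi>_def by measurable
  have pointwise: "epow (ennreal (norm h)) (- \<sigma>) * E h * epow (ennreal (norm h)) (- real n) \<le> \<psi> (norm h)"
    if "h \<noteq> 0" for h :: 'a
  proof -
    have "epow (ennreal (norm h)) (- \<sigma>) * E h * epow (ennreal (norm h)) (- real n)
        \<le> epow (ennreal (norm h)) (- \<sigma>) * (ennreal c * X (2 * norm h)) * epow (ennreal (norm h)) (- real n)"
      by (intro mult_right_mono mult_left_mono bound that) simp_all
    then show ?thesis by (simp add: \<psi>_def mult_ac)
  qed
  have "(\<integral>\<^sup>+h. epow (ennreal (norm h)) (- \<sigma>) * E h * epow (ennreal (norm h)) (- real n) \<partial>lborel)
      \<le> (\<integral>\<^sup>+h. \<psi> (norm h) \<partial>(lborel :: 'a measure))"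
    by (intro nn_integral_mono_AE, use AE_lborel_singleton[of 0] in eventually_elim) (simp add: pointwise)
  also have "\<dots> = ennreal (real n * omega_n TYPE('a))
      * (\<integral>\<^sup>+r\<in>{0<..}. ennreal (r ^ n) * \<psi> r * ennreal (1 / r) \<partial>lborel)"
    unfolding n_def by (rule nn_integral_radial) measurable
  also have "(\<integral>\<^sup>+r\<in>{0<..}. ennreal (r ^ n) * \<psi> r * ennreal (1 / r) \<partial>lborel)
      = ennreal c * (\<integral>\<^sup>+r\<in>{0<..}. epow (ennreal r) (- \<sigma>) * X (2 * r) * ennreal (1 / r) \<partial>lborel)"
  proof -
    have weight: "ennreal (r ^ n) * \<psi> r = ennreal c * (epow (ennreal r) (- \<sigma>) * X (2 * r))"
      if "0 < r" for r :: real
    proof -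
      have "ennreal (r ^ n) * epow (ennreal r) (- real n) = 1"
        using that by (simp add: epow_ennreal ennreal_mult[symmetric] powr_minus powr_realpow)
      then show ?thesis
        by (simp add: \<psi>_def mult.left_commute[of "ennreal (r ^ n)"])
    qed
    have "(\<integral>\<^sup>+r\<in>{0<..}. ennreal (r ^ n) * \<psi> r * ennreal (1 / r) \<partial>lborel)
        = (\<integral>\<^sup>+r\<in>{0<..}. ennreal c * (epow (ennreal r) (- \<sigma>) * X (2 * r) * ennreal (1 / r)) \<partial>lborel)"
    proof (intro nn_integral_cong)
      fix r :: real
      show "ennreal (r ^ n) * \<psi> r * ennreal (1 / r) * indicator {0<..} r
          = ennreal c * (epow (ennreal r) (- \<sigma>) * X (2 * r) * ennreal (1 / r)) * indicator {0<..} r"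
        by (cases "0 < r") (simp_all add: weight mult.assoc)
    qed
    then show ?thesis
      by (simp add: nn_integral_cmult mult.assoc)
  qed
  also have "(\<integral>\<^sup>+r\<in>{0<..}. epow (ennreal r) (- \<sigma>) * X (2 * r) * ennreal (1 / r) \<partial>lborel)
      = ennreal (2 powr \<sigma>) * (\<integral>\<^sup>+t\<in>{0<..}. epow (ennreal t) (- \<sigma>) * X t * ennreal (1 / t) \<partial>lborel)"
    by (rule nn_integral_dilation_powr) simp_all
  finally show ?thesis
    by (simp add: n_def mult.assoc)
qed

lemma epow_diffLp:
  assumes "0 < p" and "diffLp_pow f p = diff_pow g p"
  shows "epow (diffLp f p h) q = epow (diff_pow g p h) (q / p)"
  using assms by (simp add: diffLp_def epow_epow)

lemma polar_proj_body_eq_gauge_sublevel: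
  assumes "0 < p" "0 < s * q" and "diffLp_pow f p = diff_pow g p"
  shows "polar_proj_body f s p q = {\<xi>. gauge_integral (\<lambda>h. epow (diff_pow g p h) (q / p)) (s * q) \<xi> \<le> 1}"
  using assms epow_le_1_iff[of "1 / (s * q)"]
  by (simp add: polar_proj_body_def polar_gauge_def gauge_integral_def epow_diffLp)

lemma besov_norm_pow_eq:
  fixes f g :: "'a::euclidean_space \<Rightarrow> real"
  assumes [measurable]: "g \<in> borel_measurable borel" and "0 < p" "0 < q"
    and "diffLp_pow f p = diff_pow g p"
  shows "epow (besov_norm f s p q) q
       = (\<integral>\<^sup>+t\<in>{0<..}. epow (ennreal t) (- (s * q)) * epow (ball_average (diff_pow g p) t) (q / p)
            * ennreal (1 / t) \<partial>lborel)"
proof -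
  have "epow (diffLp f p h) p = diff_pow g p h" for h
    using epow_diffLp[OF assms(2,4), of h p] \<open>0 < p\<close> by simp
  then have "modulus f p t = epow (ball_average (diff_pow g p) t) (1 / p)" for t
    by (simp add: modulus_def ball_average_def nn_integral_completion)
  then show ?thesis
    using assms by (simp add: besov_norm_def epow_epow)
qed

lemma powr_neg_le_max_one:
  fixes x a b :: real
  assumes "0 < x" "0 \<le> a" "a \<le> b"
  shows "x powr (- a) \<le> max 1 (x powr (- b))"
proof (cases "1 \<le> x")
  case True
  then have "x powr (- a) \<le> x powr 0" using assms by (intro powr_mono) auto
  then show ?thesis using assms by simp
next
  case False
  then have "x powr (- a) \<le> x powr (- b)" using assms by (intro powr_mono') auto
  then show ?thesis by simp
qed

lemma polar_volume_le_diff_integral: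
  fixes p q s :: real and f :: "'a::euclidean_space \<Rightarrow> real"
  assumes p: "1 \<le> p" and q: "1 \<le> q" and s: "0 < s" and f: "f \<in> borel_measurable lebesgue"
  shows "ennreal (real DIM('a) * omega_n TYPE('a) powr ((DIM('a) + s * q) / DIM('a)))
           * epow (emeasure lebesgue (polar_proj_body f s p q)) (- s * q / DIM('a))
         \<le> (\<integral>\<^sup>+h. epow (ennreal (norm h)) (- s * q) * epow (diffLp f p h) q
                * epow (ennreal (norm h)) (- real DIM('a)) \<partial>lebesgue)"
proof -
  obtain g where [measurable]: "g \<in> borel_measurable borel" and g: "diffLp_pow f p = diff_pow g p"
    using diffLp_pow_eq_diff_pow_borel[OF f] by blast
  define E where "E h = epow (diff_pow g p h) (q / p)" for h
  have [measurable]: "E \<in> borel_measurable borel" unfolding E_def by measurable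
  have "emeasure lebesgue (polar_proj_body f s p q) = emeasure lborel {\<xi>. gauge_integral E (s * q) \<xi> \<le> 1}"
    using p q s by (simp add: polar_proj_body_eq_gauge_sublevel[OF _ _ g] E_def[abs_def])
  moreover have "(\<integral>\<^sup>+h. epow (ennreal (norm h)) (- s * q) * epow (diffLp f p h) q
      * epow (ennreal (norm h)) (- real DIM('a)) \<partial>lebesgue)
      = (\<integral>\<^sup>+h. epow (ennreal (norm h)) (- (s * q)) * E h * epow (ennreal (norm h)) (- real DIM('a)) \<partial>lborel)"
    using p by (simp add: nn_integral_completion E_def epow_diffLp[OF _ g])
  ultimately show ?thesis
    using gauge_sublevel_volume_le[of E "s * q"] s q by simp
qed

lemma diff_integral_le_besov:
  fixes p q s :: real and f :: "'a::euclidean_space \<Rightarrow> real"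
  assumes p: "1 \<le> p" and q: "1 \<le> q" and f: "f \<in> borel_measurable lebesgue"
  shows "(\<integral>\<^sup>+h. epow (ennreal (norm h)) (- s * q) * epow (diffLp f p h) q
            * epow (ennreal (norm h)) (- real DIM('a)) \<partial>lebesgue)
       \<le> ennreal (real DIM('a) * omega_n TYPE('a) * (2 powr p * 2 ^ DIM('a)) powr (q / p) * 2 powr (s * q))
         * epow (besov_norm f s p q) q"
proof -
  obtain g where [measurable]: "g \<in> borel_measurable borel" and g: "diffLp_pow f p = diff_pow g p"
    using diffLp_pow_eq_diff_pow_borel[OF f] by blast
  define c where "c = (2 powr p * 2 ^ DIM('a)) powr (q / p)"
  have bound: "epow (diff_pow g p h) (q / p) \<le> ennreal c * epow (ball_average (diff_pow g p) (2 * norm h)) (q / p)"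
    if "h \<noteq> 0" for h :: 'a
    using epow_mono[OF _ diff_pow_le_ball_average[OF _ p that], of "q / p"] p q
    by (simp add: c_def epow_mult_const)
  have "(\<integral>\<^sup>+h. epow (ennreal (norm h)) (- s * q) * epow (diffLp f p h) q
      * epow (ennreal (norm h)) (- real DIM('a)) \<partial>lebesgue)
      = (\<integral>\<^sup>+h. epow (ennreal (norm h)) (- (s * q)) * epow (diff_pow g p h) (q / p)
      * epow (ennreal (norm h)) (- real DIM('a)) \<partial>lborel)"
    using p by (simp add: nn_integral_completion epow_diffLp[OF _ g])
  also have "\<dots> \<le> ennreal (real DIM('a) * omega_n TYPE('a)) * ennreal c * ennreal (2 powr (s * q))
      * epow (besov_norm f s p q) q"
  proof -
    have "epow (besov_norm f s p q) q = (\<integral>\<^sup>+t\<in>{0<..}. epow (ennreal t) (- (s * q))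
        * epow (ball_average (diff_pow g p) t) (q / p) * ennreal (1 / t) \<partial>lborel)"
      using besov_norm_pow_eq[of g p q f s] g p q by simp
    then show ?thesis
      by (simp only:) (intro nn_integral_weighted_le_radial_majorant bound, simp_all add: c_def)
  qed
  finally show ?thesis
    using omega_n_pos[where 'a='a] by (simp add: c_def ennreal_mult mult.assoc)
qed

lemma polar_volume_le_besov:
  fixes p q s :: real and f :: "'a::euclidean_space \<Rightarrow> real"
  assumes p: "1 \<le> p" and q: "1 \<le> q" and s: "0 < s" "s < 1" and f: "f \<in> borel_measurable lebesgue"
  shows "epow (emeasure lebesgue (polar_proj_body f s p q)) (- s * q / DIM('a))
       \<le> ennreal ((2 powr p * 2 ^ DIM('a)) powr (q / p) * 2 powr q * max 1 (omega_n TYPE('a) powr (- q / DIM('a))))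
         * epow (besov_norm f s p q) q"
proof -
  define n where "n = real DIM('a)"
  define \<omega> where "\<omega> = omega_n TYPE('a)"
  have n: "0 < n" and \<omega>: "0 < \<omega>" using omega_n_pos[where 'a='a] by (simp_all add: n_def \<omega>_def)
  define \<sigma> where "\<sigma> = s * q"
  have \<sigma>: "0 < \<sigma>" "\<sigma> \<le> q" using s q by (simp_all add: \<sigma>_def)
  define c where "c = (2 powr p * 2 ^ DIM('a)) powr (q / p)"
  define A where "A = n * \<omega> powr ((n + \<sigma>) / n)"
  have A: "0 < A" using n \<omega> by (simp add: A_def)
  have "epow (emeasure lebesgue (polar_proj_body f s p q)) (- s * q / DIM('a))
      \<le> ennreal (1 / A) * (ennreal (n * \<omega> * c * 2 powr \<sigma>) * epow (besov_norm f s p q) q)"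
    using polar_volume_le_diff_integral[OF p q s(1) f] diff_integral_le_besov[OF p q f, of s]
    by (intro ennreal_le_divide_left A) (simp_all add: A_def n_def \<omega>_def \<sigma>_def c_def)
  also have "ennreal (1 / A) * (ennreal (n * \<omega> * c * 2 powr \<sigma>) * epow (besov_norm f s p q) q)
      = ennreal (\<omega> powr (- \<sigma> / n) * (c * 2 powr \<sigma>)) * epow (besov_norm f s p q) q"
  proof -
    have "A = \<omega> powr (\<sigma> / n) * (n * \<omega>)"
      using n \<omega> by (simp add: A_def add_divide_distrib powr_add)
    then have "1 / A * (n * \<omega> * c * 2 powr \<sigma>) = \<omega> powr (- \<sigma> / n) * (c * 2 powr \<sigma>)"
      using n \<omega> by (simp add: powr_minus field_simps)
    then show ?thesis
      using A n \<omega> by (simp add: mult.assoc[symmetric] ennreal_mult[symmetric] c_def)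
  qed
  also have "\<dots> \<le> ennreal (c * 2 powr q * max 1 (\<omega> powr (- q / n))) * epow (besov_norm f s p q) q"
  proof (intro mult_right_mono ennreal_leI)
    have "\<omega> powr (- \<sigma> / n) \<le> max 1 (\<omega> powr (- q / n))"
      using powr_neg_le_max_one[OF \<omega>, of "\<sigma> / n" "q / n"] \<sigma> n by (simp add: divide_right_mono)
    moreover have "c * 2 powr \<sigma> \<le> c * 2 powr q"
      using \<sigma> by (simp add: c_def)
    ultimately show "\<omega> powr (- \<sigma> / n) * (c * 2 powr \<sigma>) \<le> c * 2 powr q * max 1 (\<omega> powr (- q / n))"
      by (subst mult.commute) (intro mult_mono, simp_all add: c_def)
  qed simp
  finally show ?thesis
    by (simp add: c_def n_def \<omega>_def)
qed

theorem mainTheorem12: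
  fixes p q :: real
  assumes "1 \<le> p" and "1 \<le> q"
  shows "(\<forall>(s::real) (f::'a::euclidean_space \<Rightarrow> real).
            0 < s \<and> s < 1 \<and> f \<in> borel_measurable lebesgue \<longrightarrow>
            ennreal (real DIM('a) * omega_n TYPE('a) powr ((DIM('a) + s * q) / DIM('a)))
              * epow (emeasure lebesgue (polar_proj_body f s p q)) (- s * q / DIM('a))
            \<le> (\<integral>\<^sup>+ h. epow (ennreal (norm h)) (- s * q) * epow (diffLp f p h) q
                    * epow (ennreal (norm h)) (- real DIM('a)) \<partial>lebesgue))
       \<and> (\<exists>C::real. \<forall>(s::real) (f::'a \<Rightarrow> real).
            0 < s \<and> s < 1 \<and> f \<in> borel_measurable lebesgue \<longrightarrow>
            epow (emeasure lebesgue (polar_proj_body f s p q)) (- s * q / DIM('a))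
            \<le> ennreal C * epow (besov_norm f s p q) q)"
  using polar_volume_le_diff_integral[OF assms] polar_volume_le_besov[OF assms] by blast

end
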